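(* Let $m$ and $\Delta$ be numbers such that $m$ and $\langle m;\Delta\rangle$ are numbers and $\langle m;\Delta\rangle$ is balanced. Then $\langle m;\Delta\rangle=m$.
   Context: Games are short normal-play combinatorial games, written $\{L\mid R\}$, with the usual disjunctive sum $+$ and equality of values. A number is a game $G$ with $G^L<G<G^R$ for all options; short number values are identified with dyadic rationals. For numbers $m,\Delta$, the ball $\langle m;\Delta\rangle$ is the game $\{x\mid y\}$ where $x$ and $y$ are the canonical forms of $m+\Delta$ and $m-\Delta$ respectively ($m$ is the midpoint, $\Delta$ the radius); balls are only considered when they are numbers, which forces $\Delta<0$. A ball $\langle m;\Delta\rangle$ is balanced if $\langle m;\Delta\rangle+\langle m;\Delta\rangle=m+m$. *)

theory Defs
  imports Complex_Main
begin

datatype game = Game "game list" "game list"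

fun lefts :: "game \<Rightarrow> game list" where "lefts (Game l r) = l"
fun rights :: "game \<Rightarrow> game list" where "rights (Game l r) = r"

function gle :: "game \<Rightarrow> game \<Rightarrow> bool" where
  "gle (Game GL GR) (Game HL HR) =
     ((\<forall>gl\<in>set GL. \<not> gle (Game HL HR) gl) \<and> (\<forall>hr\<in>set HR. \<not> gle hr (Game GL GR)))"
  by pat_completeness auto
termination
  by (relation "measure (\<lambda>(g, h). size g + size h)")
     (auto dest!: size_list_estimation'[OF _ order_refl, of _ _ size])

definition geq :: "game \<Rightarrow> game \<Rightarrow> bool" where
  "geq G H \<longleftrightarrow> gle G H \<and> gle H G"

definition glt :: "game \<Rightarrow> game \<Rightarrow> bool" where
  "glt G H \<longleftrightarrow> gle G H \<and> \<not> gle H G"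

function gplus :: "game \<Rightarrow> game \<Rightarrow> game" where
  "gplus (Game GL GR) (Game HL HR) =
     Game (map (\<lambda>gl. gplus gl (Game HL HR)) GL @ map (\<lambda>hl. gplus (Game GL GR) hl) HL)
          (map (\<lambda>gr. gplus gr (Game HL HR)) GR @ map (\<lambda>hr. gplus (Game GL GR) hr) HR)"
  by pat_completeness auto
termination
  by (relation "measure (\<lambda>(g, h). size g + size h)")
     (auto dest!: size_list_estimation'[OF _ order_refl, of _ _ size])

definition is_number :: "game \<Rightarrow> bool" where
  "is_number G \<longleftrightarrow> (\<forall>gl\<in>set (lefts G). glt gl G) \<and> (\<forall>gr\<in>set (rights G). glt G gr)"

definition is_dyadic :: "rat \<Rightarrow> bool" where
  "is_dyadic q \<longleftrightarrow> (\<exists>k::int. \<exists>j::nat. q = of_int k / 2 ^ j)"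

fun cnat :: "nat \<Rightarrow> game" where
  "cnat 0 = Game [] []"
| "cnat (Suc n) = Game [cnat n] []"

fun cnegnat :: "nat \<Rightarrow> game" where
  "cnegnat 0 = Game [] []"
| "cnegnat (Suc n) = Game [] [cnegnat n]"

definition cint :: "int \<Rightarrow> game" where
  "cint k = (if 0 \<le> k then cnat (nat k) else cnegnat (nat (- k)))"

text \<open>Canonical form of k / 2^j:
  odd k gives {(k-1)/2^j | (k+1)/2^j}, even k is reduced.\<close>
fun cfrac :: "int \<Rightarrow> nat \<Rightarrow> game" where
  "cfrac k 0 = cint k"
| "cfrac k (Suc j) =
     (if even k then cfrac (k div 2) j
      else Game [cfrac ((k - 1) div 2) j] [cfrac ((k + 1) div 2) j])"

definition dyadic_exp :: "rat \<Rightarrow> nat" where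
  "dyadic_exp q = (LEAST j. \<exists>k::int. q * 2 ^ j = of_int k)"

definition canon :: "rat \<Rightarrow> game" where
  "canon q = cfrac \<lfloor>q * 2 ^ dyadic_exp q\<rfloor> (dyadic_exp q)"

definition ball :: "rat \<Rightarrow> rat \<Rightarrow> game" where
  "ball m \<Delta> = Game [canon (m + \<Delta>)] [canon (m - \<Delta>)]"

definition balanced :: "rat \<Rightarrow> rat \<Rightarrow> bool" where
  "balanced m \<Delta> \<longleftrightarrow> geq (gplus (ball m \<Delta>) (ball m \<Delta>)) (gplus (canon m) (canon m))"

end

theory Submission
  imports Defs
begin

text \<open>If every left option of P and Q lies below it and every right option above it, then
  P + P \<le> Q + Q forces P \<le> Q. Otherwise Q \<le> PL for a left option PL of P, or QR \<le> P for a
  right option QR of Q; either way Q \<le> P, and then P + Q \<le> P + P \<le> Q + Q \<le> PL + Q puts P + Q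
  below one of its own left options (dually QR + Q \<le> P + Q \<le> Q + Q). The ball has this
  property because it is a number, and canonical forms of dyadic rationals have it because their
  game order agrees with the order of their values. Applying the argument in both directions
  gives the equality.\<close>

lemma gle_unfold:
  "gle G H \<longleftrightarrow> (\<forall>gl\<in>set (lefts G). \<not> gle H gl) \<and> (\<forall>hr\<in>set (rights H). \<not> gle hr G)"
  by (cases G; cases H) simp

lemma gleI:
  "(\<And>gl. gl \<in> set (lefts G) \<Longrightarrow> \<not> gle H gl) \<Longrightarrow> (\<And>hr. hr \<in> set (rights H) \<Longrightarrow> \<not> gle hr G)
    \<Longrightarrow> gle G H"
  by (subst gle_unfold) blast

lemma gle_leftD: "gle G H \<Longrightarrow> gl \<in> set (lefts G) \<Longrightarrow> \<not> gle H gl"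
  by (subst (asm) gle_unfold) blast

lemma gle_rightD: "gle G H \<Longrightarrow> hr \<in> set (rights H) \<Longrightarrow> \<not> gle hr G"
  by (subst (asm) gle_unfold) blast

lemma size_left_option: "gl \<in> set (lefts G) \<Longrightarrow> size gl < size G"
  by (cases G) (auto dest!: size_list_estimation'[OF _ order_refl, of _ _ size])

lemma size_right_option: "gr \<in> set (rights G) \<Longrightarrow> size gr < size G"
  by (cases G) (auto dest!: size_list_estimation'[OF _ order_refl, of _ _ size])

lemma gle_refl: "gle G G"
proof (induction G)
  case (Game GL GR)
  show ?case
  proof (rule gleI)
    fix gl assume gl: "gl \<in> set (lefts (Game GL GR))"
    then have "gle gl gl"
      using Game.IH(1) by simp
    then show "\<not> gle (Game GL GR) gl"
      using gle_leftD[of _ gl gl] gl by blast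
  next
    fix gr assume gr: "gr \<in> set (rights (Game GL GR))"
    then have "gle gr gr"
      using Game.IH(2) by simp
    then show "\<not> gle gr (Game GL GR)"
      using gle_rightD[of gr _ gr] gr by blast
  qed
qed

lemma not_gle_left: "gl \<in> set (lefts G) \<Longrightarrow> \<not> gle G gl"
  using gle_leftD[OF gle_refl] .

lemma not_gle_right: "gr \<in> set (rights G) \<Longrightarrow> \<not> gle gr G"
  using gle_rightD[OF gle_refl] .

lemma gle_trans: "gle G H \<Longrightarrow> gle H K \<Longrightarrow> gle G K"
proof (induction "size G + size H + size K" arbitrary: G H K rule: less_induct)
  case less
  show ?case
  proof (rule gleI)
    fix gl assume gl: "gl \<in> set (lefts G)"
    show "\<not> gle K gl"
    proof
      assume "gle K gl"
      with less.prems(2) have "gle H gl"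
        using less.hyps[of H K gl] size_left_option[OF gl] by simp
      with less.prems(1) gl show False by (simp add: gle_leftD)
    qed
  next
    fix kr assume kr: "kr \<in> set (rights K)"
    show "\<not> gle kr G"
    proof
      assume "gle kr G"
      with less.prems(1) have "gle kr H"
        using less.hyps[of kr G H] size_right_option[OF kr] by simp
      with less.prems(2) kr show False by (simp add: gle_rightD)
    qed
  qed
qed

lemma lefts_gplus:
  "lefts (gplus G H) = map (\<lambda>gl. gplus gl H) (lefts G) @ map (gplus G) (lefts H)"
  by (cases G; cases H) simp

lemma rights_gplus:
  "rights (gplus G H) = map (\<lambda>gr. gplus gr H) (rights G) @ map (gplus G) (rights H)"
  by (cases G; cases H) simp

lemma gplus_commute_le: "gle (gplus G H) (gplus H G)"
proof (induction "size G + size H" arbitrary: G H rule: less_induct)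
  case less
  show ?case
  proof (rule gleI)
    fix L assume "L \<in> set (lefts (gplus G H))"
    then obtain L' where "L' \<in> set (lefts (gplus H G))" "gle L L'"
      using less.hyps size_left_option by (fastforce simp: lefts_gplus)
    then show "\<not> gle (gplus H G) L"
      using gle_trans not_gle_left by blast
  next
    fix R assume "R \<in> set (rights (gplus H G))"
    then obtain R' where "R' \<in> set (rights (gplus G H))" "gle R' R"
      using less.hyps size_right_option by (fastforce simp: rights_gplus)
    then show "\<not> gle R (gplus G H)"
      using gle_trans not_gle_right by blast
  qed
qed

lemma gle_gplus_right_cancel: "gle (gplus G X) (gplus H X) \<longleftrightarrow> gle G H"
proof (induction "size G + size H + size X" arbitrary: G H X rule: less_induct)
  case less
  show ?case
  proof
    assume GXHX: "gle (gplus G X) (gplus H X)"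
    show "gle G H"
    proof (rule gleI)
      fix gl assume gl: "gl \<in> set (lefts G)"
      then have "\<not> gle (gplus H X) (gplus gl X)"
        using gle_leftD[OF GXHX] by (simp add: lefts_gplus)
      then show "\<not> gle H gl"
        using less.hyps[of H gl X] size_left_option[OF gl] by simp
    next
      fix hr assume hr: "hr \<in> set (rights H)"
      then have "\<not> gle (gplus hr X) (gplus G X)"
        using gle_rightD[OF GXHX] by (simp add: rights_gplus)
      then show "\<not> gle hr G"
        using less.hyps[of hr G X] size_right_option[OF hr] by simp
    qed
  next
    assume GH: "gle G H"
    show "gle (gplus G X) (gplus H X)"
    proof (rule gleI)
      fix L assume "L \<in> set (lefts (gplus G X))"
      then consider gl where "gl \<in> set (lefts G)" "L = gplus gl X"
        | xl where "xl \<in> set (lefts X)" "L = gplus G xl"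
        by (auto simp: lefts_gplus)
      then show "\<not> gle (gplus H X) L"
      proof cases
        case (1 gl)
        then show ?thesis
          using gle_leftD[OF GH] less.hyps[of H gl X] size_left_option by simp
      next
        case (2 xl)
        then have "gle (gplus G xl) (gplus H xl)"
          using GH less.hyps[of G H xl] size_left_option by simp
        moreover have "gplus H xl \<in> set (lefts (gplus H X))"
          using 2 by (simp add: lefts_gplus)
        ultimately show ?thesis
          using 2 gle_trans not_gle_left by blast
      qed
    next
      fix R assume "R \<in> set (rights (gplus H X))"
      then consider hr where "hr \<in> set (rights H)" "R = gplus hr X"
        | xr where "xr \<in> set (rights X)" "R = gplus H xr"
        by (auto simp: rights_gplus)
      then show "\<not> gle R (gplus G X)"
      proof cases
        case (1 hr)
        then show ?thesis
          using gle_rightD[OF GH] less.hyps[of hr G X] size_right_option by simp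
      next
        case (2 xr)
        then have "gle (gplus G xr) (gplus H xr)"
          using GH less.hyps[of G H xr] size_right_option by simp
        moreover have "gplus G xr \<in> set (rights (gplus G X))"
          using 2 by (simp add: rights_gplus)
        ultimately show ?thesis
          using 2 gle_trans not_gle_right by blast
      qed
    qed
  qed
qed

lemma gplus_mono_left: "gle G H \<Longrightarrow> gle (gplus G X) (gplus H X)"
  by (simp add: gle_gplus_right_cancel)

lemma gplus_mono_right: "gle G H \<Longrightarrow> gle (gplus X G) (gplus X H)"
  by (meson gle_trans gplus_commute_le gplus_mono_left)

lemma lefts_cint: "lefts (cint k) = (if k \<le> 0 then [] else [cint (k - 1)])"
  unfolding cint_def by (cases "nat k"; cases "nat (- k)") (auto simp: nat_diff_distrib)

lemma rights_cint: "rights (cint k) = (if 0 \<le> k then [] else [cint (k + 1)])"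
proof (cases "k < 0")
  case True
  then have "nat (- k) = Suc (nat (- (k + 1)))"
    by simp
  with True show ?thesis
    by (cases "k = -1") (simp_all add: cint_def)
qed (cases "nat k", simp_all add: cint_def)

lemma cfrac_reduced_form:
  "\<exists>k' j'. cfrac k j = cfrac k' j' \<and> (of_int k / 2 ^ j :: rat) = of_int k' / 2 ^ j' \<and> (j' = 0 \<or> odd k')"
proof (induction j arbitrary: k)
  case (Suc j)
  show ?case
  proof (cases "even k")
    case True
    then have "(of_int k / 2 ^ Suc j :: rat) = of_int (k div 2) / 2 ^ j"
      by (auto elim!: evenE)
    with True Suc.IH[of "k div 2"] show ?thesis by auto
  qed blast
qed blast

text \<open>For odd k the option cfrac ((k - 1) div 2) j of cfrac k (Suc j) is cfrac (k - 1) (Suc j),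
  since k - 1 is even; so the options of a reduced fraction are its neighbours at the same
  denominator.\<close>

lemma lefts_cfrac_reduced:
  "j = 0 \<or> odd k \<Longrightarrow> lefts (cfrac k j) = (if j = 0 \<and> k \<le> 0 then [] else [cfrac (k - 1) j])"
  by (cases j) (auto simp: lefts_cint)

lemma rights_cfrac_reduced:
  "j = 0 \<or> odd k \<Longrightarrow> rights (cfrac k j) = (if j = 0 \<and> 0 \<le> k then [] else [cfrac (k + 1) j])"
  by (cases j) (auto simp: rights_cint)

lemma frac_common_denom:
  assumes "j \<le> i"
  shows "(of_int k / 2 ^ j :: rat) = of_int (k * 2 ^ (i - j)) / 2 ^ i"
proof -
  have "(2::rat) ^ i = 2 ^ j * 2 ^ (i - j)"
    using assms by (simp flip: power_add)
  then show ?thesis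
    by simp
qed

lemma frac_le_iff: "(of_int a / 2 ^ n :: rat) \<le> of_int b / 2 ^ n \<longleftrightarrow> a \<le> b"
  by (simp add: divide_le_cancel)

lemma frac_less_iff: "(of_int a / 2 ^ n :: rat) < of_int b / 2 ^ n \<longleftrightarrow> a < b"
  by (simp add: divide_less_cancel)

lemma frac_lt_cases:
  fixes k l :: int and i j :: nat
  assumes lt: "(of_int l / 2 ^ i :: rat) < of_int k / 2 ^ j"
  shows "(\<not> (j = 0 \<and> k \<le> 0) \<and> (of_int l / 2 ^ i :: rat) \<le> of_int (k - 1) / 2 ^ j) \<or>
         (\<not> (i = 0 \<and> 0 \<le> l) \<and> (of_int (l + 1) / 2 ^ i :: rat) \<le> of_int k / 2 ^ j)"
proof (cases "j \<le> i")
  case True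
  have "l < k * 2 ^ (i - j)"
    using lt unfolding frac_common_denom[OF True] frac_less_iff .
  then show ?thesis
    using True unfolding frac_common_denom[OF True] frac_le_iff by auto
next
  case False
  then have "i \<le> j"
    by simp
  have "l * 2 ^ (j - i) < k"
    using lt unfolding frac_common_denom[OF \<open>i \<le> j\<close>] frac_less_iff .
  then show ?thesis
    using False unfolding frac_common_denom[OF \<open>i \<le> j\<close>] frac_le_iff by simp
qed

lemma gle_cfrac_iff:
  "gle (cfrac k j) (cfrac l i) \<longleftrightarrow> (of_int k / 2 ^ j :: rat) \<le> of_int l / 2 ^ i"
proof (induction "size (cfrac k j) + size (cfrac l i)" arbitrary: k j l i rule: less_induct)
  case less
  obtain k' j' where G: "cfrac k j = cfrac k' j'" "(of_int k / 2 ^ j :: rat) = of_int k' / 2 ^ j'"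
    and "j' = 0 \<or> odd k'"
    using cfrac_reduced_form by blast
  then have GL: "lefts (cfrac k j) = (if j' = 0 \<and> k' \<le> 0 then [] else [cfrac (k' - 1) j'])"
    by (simp add: lefts_cfrac_reduced)
  obtain l' i' where H: "cfrac l i = cfrac l' i'" "(of_int l / 2 ^ i :: rat) = of_int l' / 2 ^ i'"
    and "i' = 0 \<or> odd l'"
    using cfrac_reduced_form by blast
  then have HR: "rights (cfrac l i) = (if i' = 0 \<and> 0 \<le> l' then [] else [cfrac (l' + 1) i'])"
    by (simp add: rights_cfrac_reduced)
  have IH_left: "gle (cfrac l i) (cfrac (k' - 1) j') \<longleftrightarrow>
      (of_int l / 2 ^ i :: rat) \<le> of_int (k' - 1) / 2 ^ j'" if "\<not> (j' = 0 \<and> k' \<le> 0)"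
    using less.hyps size_left_option[of "cfrac (k' - 1) j'" "cfrac k j"] GL that by simp
  have IH_right: "gle (cfrac (l' + 1) i') (cfrac k j) \<longleftrightarrow>
      (of_int (l' + 1) / 2 ^ i' :: rat) \<le> of_int k / 2 ^ j" if "\<not> (i' = 0 \<and> 0 \<le> l')"
    using less.hyps size_right_option[of "cfrac (l' + 1) i'" "cfrac l i"] HR that by simp
  show ?case
  proof
    assume le: "gle (cfrac k j) (cfrac l i)"
    show "(of_int k / 2 ^ j :: rat) \<le> of_int l / 2 ^ i"
    proof (rule ccontr)
      assume "\<not> ?thesis"
      then consider "\<not> (j' = 0 \<and> k' \<le> 0)" "(of_int l / 2 ^ i :: rat) \<le> of_int (k' - 1) / 2 ^ j'"
        | "\<not> (i' = 0 \<and> 0 \<le> l')" "(of_int (l' + 1) / 2 ^ i' :: rat) \<le> of_int k / 2 ^ j"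
        using frac_lt_cases[of l' i' k' j'] G(2) H(2) by fastforce
      then show False
        using le IH_left IH_right GL HR by cases (auto dest: gle_leftD gle_rightD)
    qed
  next
    assume le: "(of_int k / 2 ^ j :: rat) \<le> of_int l / 2 ^ i"
    have "(of_int (k' - 1) / 2 ^ j' :: rat) < of_int k / 2 ^ j"
      "(of_int l / 2 ^ i :: rat) < of_int (l' + 1) / 2 ^ i'"
      using G(2) H(2) by (simp_all add: divide_strict_right_mono)
    with le show "gle (cfrac k j) (cfrac l i)"
      using IH_left IH_right GL HR by (intro gleI) (auto split: if_splits)
  qed
qed

definition weakly_numeric :: "game \<Rightarrow> bool" where
  "weakly_numeric G \<longleftrightarrow> (\<forall>gl\<in>set (lefts G). gle gl G) \<and> (\<forall>gr\<in>set (rights G). gle G gr)"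

lemma number_imp_weakly_numeric: "is_number G \<Longrightarrow> weakly_numeric G"
  by (simp add: is_number_def weakly_numeric_def glt_def)

lemma weakly_numeric_cfrac: "weakly_numeric (cfrac k j)"
proof -
  obtain k' j' where "cfrac k j = cfrac k' j'" "j' = 0 \<or> odd k'"
    using cfrac_reduced_form by blast
  then have "set (lefts (cfrac k j)) \<subseteq> {cfrac (k' - 1) j'}"
    "set (rights (cfrac k j)) \<subseteq> {cfrac (k' + 1) j'}"
    by (simp_all add: lefts_cfrac_reduced rights_cfrac_reduced)
  moreover have "gle (cfrac (k' - 1) j') (cfrac k' j')" "gle (cfrac k' j') (cfrac (k' + 1) j')"
    unfolding gle_cfrac_iff frac_le_iff by simp_all
  ultimately show ?thesis
    using \<open>cfrac k j = cfrac k' j'\<close> by (auto simp: weakly_numeric_def simp del: cfrac.simps)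
qed

lemma gle_if_double_gle:
  assumes P: "weakly_numeric P" and Q: "weakly_numeric Q"
    and double: "gle (gplus P P) (gplus Q Q)"
  shows "gle P Q"
proof (rule ccontr)
  assume "\<not> gle P Q"
  then consider pl where "pl \<in> set (lefts P)" "gle Q pl"
    | qr where "qr \<in> set (rights Q)" "gle qr P"
    using gleI by blast
  then show False
  proof cases
    case (1 pl)
    with P have "gle Q P"
      by (auto simp: weakly_numeric_def intro: gle_trans)
    then have "gle (gplus P Q) (gplus pl Q)"
      using gplus_mono_right double gplus_mono_left[OF \<open>gle Q pl\<close>] gle_trans by blast
    moreover have "gplus pl Q \<in> set (lefts (gplus P Q))"
      using 1 by (simp add: lefts_gplus)
    ultimately show False
      using not_gle_left by blast
  next
    case (2 qr)
    with Q have "gle Q P"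
      by (auto simp: weakly_numeric_def intro: gle_trans)
    then have "gle (gplus qr Q) (gplus Q Q)"
      using gplus_mono_right double gplus_mono_left[OF \<open>gle qr P\<close>] gle_trans by blast
    moreover have "gplus qr Q \<in> set (rights (gplus Q Q))"
      using 2 by (simp add: rights_gplus)
    ultimately show False
      using not_gle_right by blast
  qed
qed

theorem lemma2p9:
  fixes m \<Delta> :: rat
  assumes "is_dyadic m" and "is_dyadic \<Delta>"
    and "is_number (ball m \<Delta>)"
    and "balanced m \<Delta>"
  shows "geq (ball m \<Delta>) (canon m)"
proof -
  have "weakly_numeric (ball m \<Delta>)"
    using assms(3) by (rule number_imp_weakly_numeric)
  moreover have "weakly_numeric (canon m)"
    unfolding canon_def by (rule weakly_numeric_cfrac)
  ultimately show ?thesis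
    using assms(4) gle_if_double_gle unfolding balanced_def geq_def by blast
qed

end
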